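(* For every integer $T>0$ and real $\lambda>0$: (i) with $r=\sqrt{(T+1)n}$ and $n\ge r^2/\lambda^2$, $\mathsf{VC}\text{-}\mathsf{dim}\big(\mathbb{H}_{r,\lambda}(\mathcal{E}_{\mathsf{WLOA}}(n,d_T))\big)\in\Theta(r^2/\lambda^2)$; (ii) with $r=\sqrt{T/(T+1)}$ and $n\ge r^2/\lambda^2$, $\mathsf{VC}\text{-}\mathsf{dim}\big(\mathbb{H}_{1,\lambda}(\overline{\mathcal{E}}_{\mathsf{WLOA}}(n,d_T))\big)\in\Theta(1/\lambda^2)$.
   Context: $\mathcal{G}_n$ is the set of (unlabeled, simple, undirected) graphs on $n$ vertices. $1$-WL colouring: $C^1_0$ constant, $C^1_t(v)=\mathsf{RELABEL}(C^1_{t-1}(v),\{\!\{C^1_{t-1}(u):u\in N(v)\}\!\})$ with a fixed injective $\mathsf{RELABEL}$ shared by all graphs; $\Sigma_t$ is the set of colours at round $t$ over all of $\mathcal{G}_n$ and $\phi_t(G)_c$ is the number of vertices of $G$ with colour $c$ at round $t$. The Weisfeiler–Leman optimal assignment feature map $\phi^{(T)}_{\mathsf{WLOA}}(G)\in\{0,1\}^{d_T}$ has one coordinate for each triple $(t,c,j)$ with $t\in\{0,\dots,T\}$, $c\in\Sigma_t$, $j\in\{1,\dots,n\}$, equal to $1$ if $\phi_t(G)_c\ge j$ and $0$ otherwise (so $\langle\phi^{(T)}_{\mathsf{WLOA}}(G),\phi^{(T)}_{\mathsf{WLOA}}(H)\rangle=\sum_{t=0}^T\sum_{c\in\Sigma_t}\min(\phi_t(G)_c,\phi_t(H)_c)$).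 $\overline{\phi^{(T)}_{\mathsf{WLOA}}}$ is its normalisation to unit Euclidean norm; $\mathcal{E}_{\mathsf{WLOA}}(n,d_T)=\{\phi^{(T)}_{\mathsf{WLOA}}\}$, $\overline{\mathcal{E}}_{\mathsf{WLOA}}(n,d_T)=\{\overline{\phi^{(T)}_{\mathsf{WLOA}}}\}$. A sample $(\mathbf{x}_i,y_i)\subset\mathbb{R}^d\times\{0,1\}$ is $(r,\lambda)$-separable if the points lie in a ball of radius $r$ and the distance between the convex hulls of the two classes is at least $2\lambda$. $\mathbb{H}_{r,\lambda}(\mathcal{E})$ is the set of partial concepts $h:\mathcal{G}_n\to\{0,1,\star\}$ such that every finite list of graphs with $h\neq\star$, labelled by $h$ and embedded by some $\mathrm{emb}\in\mathcal{E}$, is $(r,\lambda)$-separable. VC dimension: largest size of a set shattered by the class (every $0/1$ pattern realised). *)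

theory Defs
  imports "HOL-Analysis.Analysis" "HOL-Library.Multiset"
begin

definition lgraphs :: "nat \<Rightarrow> (nat \<times> nat) set set" where
  "lgraphs n = {E. E \<subseteq> {0..<n} \<times> {0..<n} \<and> sym E \<and> (\<forall>v. (v, v) \<notin> E)}"

definition graph_iso :: "nat \<Rightarrow> (nat \<times> nat) set \<Rightarrow> (nat \<times> nat) set \<Rightarrow> bool" where
  "graph_iso n E F = (\<exists>p. bij_betw p {0..<n} {0..<n} \<and> F = (\<lambda>(u, v). (p u, p v)) ` E)"

text \<open>Unlabelled graphs on n vertices = isomorphism classes of labelled graphs.\<close>
definition Gn :: "nat \<Rightarrow> (nat \<times> nat) set set set" where
  "Gn n = (\<lambda>E. {F \<in> lgraphs n. graph_iso n E F}) ` lgraphs n"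

section \<open>1-WL colours (RELABEL = the injective constructor Step)\<close>

datatype wlcol = Init | Step wlcol "wlcol multiset"

fun wl :: "(nat \<times> nat) set \<Rightarrow> nat \<Rightarrow> nat \<Rightarrow> wlcol" where
  "wl E 0 v = Init"
| "wl E (Suc t) v = Step (wl E t v) (image_mset (wl E t) (mset_set {u. (v, u) \<in> E}))"

definition Sigma :: "nat \<Rightarrow> nat \<Rightarrow> wlcol set" where
  "Sigma n t = {wl E t v | E v. E \<in> lgraphs n \<and> v < n}"

definition colcount :: "nat \<Rightarrow> (nat \<times> nat) set \<Rightarrow> nat \<Rightarrow> wlcol \<Rightarrow> nat" where
  "colcount n E t c = card {v \<in> {0..<n}. wl E t v = c}"

type_synonym coord = "nat \<times> wlcol \<times> nat"

definition wloa_coords :: "nat \<Rightarrow> nat \<Rightarrow> coord set" where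
  "wloa_coords n T = {(t, c, j). t \<le> T \<and> c \<in> Sigma n t \<and> 1 \<le> j \<and> j \<le> n}"

definition wloa_lab :: "nat \<Rightarrow> nat \<Rightarrow> (nat \<times> nat) set \<Rightarrow> coord \<Rightarrow> real" where
  "wloa_lab n T E = (\<lambda>(t, c, j). if (t, c, j) \<in> wloa_coords n T \<and> j \<le> colcount n E t c then 1 else 0)"

definition wloa :: "nat \<Rightarrow> nat \<Rightarrow> (nat \<times> nat) set set \<Rightarrow> coord \<Rightarrow> real" where
  "wloa n T G = wloa_lab n T (SOME E. E \<in> G)"

definition l2norm :: "coord set \<Rightarrow> (coord \<Rightarrow> real) \<Rightarrow> real" where
  "l2norm D x = sqrt (\<Sum>k\<in>D. (x k)\<^sup>2)"

definition l2dist :: "coord set \<Rightarrow> (coord \<Rightarrow> real) \<Rightarrow> (coord \<Rightarrow> real) \<Rightarrow> real" where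
  "l2dist D x y = l2norm D (\<lambda>k. x k - y k)"

definition wloa_norm :: "nat \<Rightarrow> nat \<Rightarrow> (nat \<times> nat) set set \<Rightarrow> coord \<Rightarrow> real" where
  "wloa_norm n T G = (\<lambda>k. wloa n T G k / l2norm (wloa_coords n T) (wloa n T G))"

definition chull :: "(coord \<Rightarrow> real) set \<Rightarrow> (coord \<Rightarrow> real) set" where
  "chull P = {y. \<exists>S a. finite S \<and> S \<noteq> {} \<and> S \<subseteq> P \<and> (\<forall>x\<in>S. 0 \<le> a x) \<and> sum a S = 1
                   \<and> y = (\<lambda>k. \<Sum>x\<in>S. a x * x k)}"

text \<open>Class-1 points P1, class-0 points P0: they lie in a (closed) ball of radius r and
  the distance between their convex hulls is at least 2 lambda (vacuous if a class is empty).\<close>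
definition separable :: "coord set \<Rightarrow> real \<Rightarrow> real \<Rightarrow> (coord \<Rightarrow> real) set \<Rightarrow> (coord \<Rightarrow> real) set \<Rightarrow> bool" where
  "separable D r lam P1 P0 \<longleftrightarrow>
     (\<exists>c. \<forall>x \<in> P1 \<union> P0. l2dist D c x \<le> r) \<and>
     (\<forall>x \<in> chull P1. \<forall>y \<in> chull P0. 2 * lam \<le> l2dist D x y)"

text \<open>Partial concepts: None = star, Some True = 1, Some False = 0.
  H_{r,lambda}(E) for the singleton embedding family E = {emb}.\<close>
definition Hclass :: "nat \<Rightarrow> coord set \<Rightarrow> real \<Rightarrow> real \<Rightarrow> ((nat \<times> nat) set set \<Rightarrow> coord \<Rightarrow> real)
     \<Rightarrow> ((nat \<times> nat) set set \<Rightarrow> bool option) set" where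
  "Hclass n D r lam emb = {h. (\<forall>G. G \<notin> Gn n \<longrightarrow> h G = None) \<and>
     (\<forall>S. finite S \<and> S \<subseteq> {G \<in> Gn n. h G \<noteq> None} \<longrightarrow>
        separable D r lam (emb ` {G \<in> S. h G = Some True}) (emb ` {G \<in> S. h G = Some False}))}"

definition shatters :: "('a \<Rightarrow> bool option) set \<Rightarrow> 'a set \<Rightarrow> bool" where
  "shatters H S \<longleftrightarrow> (\<forall>f :: 'a \<Rightarrow> bool. \<exists>h \<in> H. \<forall>x \<in> S. h x = Some (f x))"

definition vc_dim :: "('a \<Rightarrow> bool option) set \<Rightarrow> 'a set \<Rightarrow> nat" where
  "vc_dim H X = Max {card S | S. S \<subseteq> X \<and> finite S \<and> shatters H S}"

end

theory Submission
  imports Defs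
begin

(*
  Upper bound. Enumerate a shattered set and split it into k pairs. Orienting the pairs
  greedily, so that each new difference vector makes a nonpositive inner product with the
  signed sum of the previous ones, gives a signed sum of squared norm at most the sum of the
  squared differences, each at most (2r)^2. For the labelling that puts the first element of
  every oriented pair into class 1, the centroids of the two classes lie in the two convex
  hulls at distance at most 2r / sqrt k; separability then gives k <= r^2 / lambda^2.

  Lower bound. The circulant graph on n vertices joining vertices at cyclic distance at most
  k is 2k-regular, so 1-WL gives all its vertices the same colour c_2k(t) in every round and
  its WLOA feature vector is the indicator of {(t, c_2k(t), j)}. The colours c_d(t), t >= 1,
  determine d, so the feature vectors of different circulant graphs agree on the round-0
  coordinates and each has T n private coordinates of its own. Points with private supports
  of size N and height s are shattered with margin lambda once 4 lambda^2 m <= s^2 N: on the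
  private coordinates of one class, the difference of two convex combinations has squared
  norm at least s^2 N / m by Cauchy-Schwarz. The hypothesis r^2 / lambda^2 <= n guarantees
  that there are enough circulant graphs.
*)

lemma l2dist_power2: "(l2dist D x y)\<^sup>2 = (\<Sum>k\<in>D. (x k - y k)\<^sup>2)"
  unfolding l2dist_def l2norm_def by (simp add: sum_nonneg)

lemma l2dist_nonneg: "0 \<le> l2dist D x y"
  unfolding l2dist_def l2norm_def by (simp add: sum_nonneg)

lemma l2dist_le_iff:
  assumes "0 \<le> r"
  shows "l2dist D x y \<le> r \<longleftrightarrow> (\<Sum>k\<in>D. (x k - y k)\<^sup>2) \<le> r\<^sup>2"
  using assms l2dist_nonneg[of D x y] by (simp flip: l2dist_power2 add: power_mono_iff)

lemma le_l2dist_iff: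
  assumes "0 \<le> r"
  shows "r \<le> l2dist D x y \<longleftrightarrow> r\<^sup>2 \<le> (\<Sum>k\<in>D. (x k - y k)\<^sup>2)"
  using assms l2dist_nonneg[of D x y] by (simp flip: l2dist_power2 add: power_mono_iff)

lemma sum_sq_diff_le_if_l2dist_le:
  assumes "l2dist D c x \<le> r" "l2dist D c y \<le> r"
  shows "(\<Sum>k\<in>D. (x k - y k)\<^sup>2) \<le> 4 * r\<^sup>2"
proof -
  have r: "0 \<le> r" using assms(1) l2dist_nonneg[of D c x] by linarith
  have "(x k - y k)\<^sup>2 \<le> 2 * (c k - x k)\<^sup>2 + 2 * (c k - y k)\<^sup>2" for k
  proof -
    have "2 * (c k - x k)\<^sup>2 + 2 * (c k - y k)\<^sup>2 = (x k - y k)\<^sup>2 + (2 * c k - x k - y k)\<^sup>2"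
      by (simp add: power2_eq_square algebra_simps)
    moreover have "0 \<le> (2 * c k - x k - y k)\<^sup>2" by simp
    ultimately show ?thesis by linarith
  qed
  then have "(\<Sum>k\<in>D. (x k - y k)\<^sup>2) \<le> 2 * (\<Sum>k\<in>D. (c k - x k)\<^sup>2) + 2 * (\<Sum>k\<in>D. (c k - y k)\<^sup>2)"
    by (simp add: sum_distrib_left flip: sum.distrib) (rule sum_mono)
  also have "\<dots> \<le> 2 * r\<^sup>2 + 2 * r\<^sup>2"
    using assms r by (simp add: l2dist_le_iff)
  finally show ?thesis by simp
qed

lemma sum_indicator_real:
  assumes "finite D" "K \<subseteq> D"
  shows "(\<Sum>x\<in>D. indicator K x :: real) = card K"
  using sum.inter_restrict[OF assms(1), of "\<lambda>_. 1 :: real" K] Int_absorb1[OF assms(2)]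
  by (simp add: indicator_def of_bool_def)

lemma l2norm_indicator:
  assumes "finite D" "K \<subseteq> D"
  shows "l2norm D (indicator K) = sqrt (card K)"
proof -
  have "(\<Sum>x\<in>D. (indicator K x :: real)\<^sup>2) = (\<Sum>x\<in>D. indicator K x)"
    by (intro sum.cong) (auto simp: indicator_def)
  then show ?thesis
    unfolding l2norm_def using sum_indicator_real[OF assms] by simp
qed

lemma sum_sq_diff_scaled_indicators:
  fixes s :: real
  assumes "finite D" "C \<subseteq> K" "K \<subseteq> D"
  shows "(\<Sum>x\<in>D. (s * indicator C x - s * indicator K x)\<^sup>2) = s\<^sup>2 * card (K - C)"
proof -
  have "(\<Sum>x\<in>D. (s * indicator C x - s * indicator K x)\<^sup>2) = (\<Sum>x\<in>D. s\<^sup>2 * indicator (K - C) x)"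
    using assms(2) by (intro sum.cong) (auto simp: indicator_def)
  also have "\<dots> = s\<^sup>2 * card (K - C)"
    using assms sum_indicator_real[of D "K - C"] by (auto simp flip: sum_distrib_left)
  finally show ?thesis .
qed

lemma convex_combination_in_chull:
  assumes "finite I" "I \<noteq> {}" "\<forall>i\<in>I. 0 \<le> a i" "sum a I = 1" "p ` I \<subseteq> P"
  shows "(\<lambda>k. \<Sum>i\<in>I. a i * p i k) \<in> chull P"
proof -
  define w where "w x = (\<Sum>i\<in>{i\<in>I. p i = x}. a i)" for x
  have "(\<Sum>i\<in>I. a i * p i k) = (\<Sum>x\<in>p ` I. w x * x k)" for k
    unfolding w_def sum_distrib_right using assms(1)
    by (subst sum.image_gen[where g = p]) (auto intro!: sum.cong)
  moreover have "sum w (p ` I) = 1"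
    unfolding w_def using assms(1,4) sum.image_gen[of I a p] by simp
  moreover have "\<forall>x\<in>p ` I. 0 \<le> w x"
    unfolding w_def using assms(3) by (auto intro: sum_nonneg)
  ultimately show ?thesis
    unfolding chull_def using assms(1,2,5) by (intro CollectI exI[of _ "p ` I"] exI[of _ w]) auto
qed

lemma chull_imageE:
  assumes "y \<in> chull (p ` I)"
  obtains J a where "finite J" "J \<noteq> {}" "J \<subseteq> I" "\<forall>j\<in>J. 0 \<le> a j" "sum a J = 1"
    "y = (\<lambda>k. \<Sum>j\<in>J. a j * p j k)"
proof -
  obtain S b where S: "finite S" "S \<noteq> {}" "S \<subseteq> p ` I" "\<forall>x\<in>S. 0 \<le> b x" "sum b S = 1"
    and y: "y = (\<lambda>k. \<Sum>x\<in>S. b x * x k)"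
    using assms unfolding chull_def by blast
  define J where "J = inv_into I p ` S"
  have inj: "inj_on (inv_into I p) S"
    using S(3) by (rule inj_on_inv_into)
  have p_inv: "p (inv_into I p x) = x" if "x \<in> S" for x
    using S(3) that by (auto intro: f_inv_into_f)
  have "(\<Sum>j\<in>J. g j) = (\<Sum>x\<in>S. g (inv_into I p x))" for g :: "_ \<Rightarrow> real"
    unfolding J_def by (rule sum.reindex[OF inj, unfolded comp_def])
  then have "sum (b \<circ> p) J = 1" "y = (\<lambda>k. \<Sum>j\<in>J. (b \<circ> p) j * p j k)"
    using S(5) y p_inv by simp_all
  moreover have "J \<subseteq> I" "\<forall>j\<in>J. 0 \<le> (b \<circ> p) j"
    unfolding J_def using S(3,4) p_inv by (auto intro: inv_into_into)
  ultimately show thesis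
    using S(1,2) that[of J "b \<circ> p"] unfolding J_def by blast
qed

section \<open>Upper bound: balanced splits of points in a ball\<close>

lemma exists_signs_sum_sq_le:
  fixes d :: "nat \<Rightarrow> 'a \<Rightarrow> real"
  shows "\<exists>\<sigma>. (\<Sum>x\<in>D. (\<Sum>i<k. if \<sigma> i then d i x else - d i x)\<^sup>2) \<le> (\<Sum>i<k. \<Sum>x\<in>D. (d i x)\<^sup>2)"
proof (induction k)
  case 0
  show ?case by simp
next
  case (Suc k)
  then obtain \<sigma> where IH: "(\<Sum>x\<in>D. (\<Sum>i<k. if \<sigma> i then d i x else - d i x)\<^sup>2) \<le> (\<Sum>i<k. \<Sum>x\<in>D. (d i x)\<^sup>2)"
    by blast
  define v where "v x = (\<Sum>i<k. if \<sigma> i then d i x else - d i x)" for x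
  define \<epsilon> :: real where "\<epsilon> = (if (\<Sum>x\<in>D. v x * d k x) \<le> 0 then 1 else -1)"
  \<comment> \<open>The new sign is chosen against the partial sum, so the cross term is nonpositive.\<close>
  have cross: "\<epsilon> * (\<Sum>x\<in>D. v x * d k x) \<le> 0"
    unfolding \<epsilon>_def by simp
  have "(\<Sum>x\<in>D. (v x + \<epsilon> * d k x)\<^sup>2)
      = (\<Sum>x\<in>D. (v x)\<^sup>2) + 2 * (\<epsilon> * (\<Sum>x\<in>D. v x * d k x)) + (\<Sum>x\<in>D. (d k x)\<^sup>2)"
    by (simp add: power2_sum power_mult_distrib \<epsilon>_def sum.distrib sum_distrib_left algebra_simps)
  also have "\<dots> \<le> (\<Sum>i<Suc k. \<Sum>x\<in>D. (d i x)\<^sup>2)"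
    using IH cross by (simp add: v_def)
  finally have step: "(\<Sum>x\<in>D. (v x + \<epsilon> * d k x)\<^sup>2) \<le> (\<Sum>i<Suc k. \<Sum>x\<in>D. (d i x)\<^sup>2)" .
  have "(\<Sum>i<Suc k. if (\<sigma>(k := \<epsilon> = 1)) i then d i x else - d i x) = v x + \<epsilon> * d k x" for x
    unfolding v_def \<epsilon>_def by (auto intro!: sum.cong)
  then show ?case using step by (intro exI[of _ "\<sigma>(k := \<epsilon> = 1)"]) simp
qed

lemma exists_split_with_close_hulls:
  fixes q :: "nat \<Rightarrow> coord \<Rightarrow> real"
  assumes ball: "\<forall>i<m. l2dist D c (q i) \<le> r" and k: "0 < k" "2 * k \<le> m"
  obtains J u w where "J \<subseteq> {..<m}" "u \<in> chull (q ` J)" "w \<in> chull (q ` ({..<m} - J))"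
    "real k * (\<Sum>x\<in>D. (u x - w x)\<^sup>2) \<le> 4 * r\<^sup>2"
proof -
  define d where "d i x = q (2 * i) x - q (2 * i + 1) x" for i x
  obtain \<sigma> where \<sigma>: "(\<Sum>x\<in>D. (\<Sum>i<k. if \<sigma> i then d i x else - d i x)\<^sup>2) \<le> (\<Sum>i<k. \<Sum>x\<in>D. (d i x)\<^sup>2)"
    using exists_signs_sum_sq_le by blast
  define pos where "pos i = (if \<sigma> i then 2 * i else 2 * i + 1)" for i
  define neg where "neg i = (if \<sigma> i then 2 * i + 1 else 2 * i)" for i
  define J where "J = pos ` {..<k}"
  define u where "u x = (\<Sum>i<k. 1 / k * q (pos i) x)" for x
  define w where "w x = (\<Sum>i<k. 1 / k * q (neg i) x)" for x
  have pos_neg_less: "pos i < m" "neg i < m" if "i < k" for i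
    using that k unfolding pos_def neg_def by auto
  have neg_notin: "neg i \<notin> J" if "i < k" for i
    unfolding J_def pos_def neg_def by (auto split: if_splits; presburger)
  have "J \<subseteq> {..<m}"
    unfolding J_def using pos_neg_less by auto
  moreover have "u \<in> chull (q ` J)"
    unfolding u_def J_def image_image using k
    by (intro convex_combination_in_chull[of "{..<k}" "\<lambda>_. 1 / k" "\<lambda>i. q (pos i)"]) auto
  moreover have "w \<in> chull (q ` ({..<m} - J))"
    unfolding w_def using k pos_neg_less neg_notin
    by (intro convex_combination_in_chull[of "{..<k}" "\<lambda>_. 1 / k" "\<lambda>i. q (neg i)"]) auto
  moreover have "real k * (\<Sum>x\<in>D. (u x - w x)\<^sup>2) \<le> 4 * r\<^sup>2"
  proof -
    have uw: "u x - w x = 1 / k * (\<Sum>i<k. if \<sigma> i then d i x else - d i x)" for x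
      unfolding u_def w_def d_def pos_def neg_def
      by (simp add: sum_distrib_left flip: sum_subtractf) (rule sum.cong; simp add: diff_divide_distrib)
    have "(\<Sum>x\<in>D. (d i x)\<^sup>2) \<le> 4 * r\<^sup>2" if "i < k" for i
      unfolding d_def using ball that k by (intro sum_sq_diff_le_if_l2dist_le[of D c]) auto
    then have "(\<Sum>i<k. \<Sum>x\<in>D. (d i x)\<^sup>2) \<le> (\<Sum>i<k. 4 * r\<^sup>2)"
      by (intro sum_mono) simp
    then have "(\<Sum>x\<in>D. (\<Sum>i<k. if \<sigma> i then d i x else - d i x)\<^sup>2) \<le> k * (4 * r\<^sup>2)"
      using \<sigma> by simp
    then have "(1 / k)\<^sup>2 * (\<Sum>x\<in>D. (\<Sum>i<k. if \<sigma> i then d i x else - d i x)\<^sup>2) \<le> (1 / k)\<^sup>2 * (k * (4 * r\<^sup>2))"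
      by (rule mult_left_mono) simp
    then show ?thesis
      using k unfolding uw power_mult_distrib sum_distrib_left[symmetric]
      by (simp add: power2_eq_square field_simps)
  qed
  ultimately show thesis ..
qed

lemma card_le_if_splits_separated:
  fixes q :: "nat \<Rightarrow> coord \<Rightarrow> real"
  assumes lam: "0 < lam"
    and ball: "\<forall>i<m. l2dist D c (q i) \<le> r"
    and split: "\<forall>J \<subseteq> {..<m}. \<forall>u\<in>chull (q ` J). \<forall>w\<in>chull (q ` ({..<m} - J)). 2 * lam \<le> l2dist D u w"
  shows "real m \<le> 2 * (r\<^sup>2 / lam\<^sup>2) + 1"
proof -
  define k where "k = m div 2"
  have "real k \<le> r\<^sup>2 / lam\<^sup>2"
  proof (cases "k = 0")
    case False
    then obtain J u w where "J \<subseteq> {..<m}" "u \<in> chull (q ` J)" "w \<in> chull (q ` ({..<m} - J))"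
      and close: "real k * (\<Sum>x\<in>D. (u x - w x)\<^sup>2) \<le> 4 * r\<^sup>2"
      using exists_split_with_close_hulls[OF ball, of k] unfolding k_def by auto
    then have "2 * lam \<le> l2dist D u w"
      using split by blast
    then have "4 * lam\<^sup>2 \<le> (\<Sum>x\<in>D. (u x - w x)\<^sup>2)"
      using lam by (simp add: le_l2dist_iff power_mult_distrib)
    then have "real k * (4 * lam\<^sup>2) \<le> real k * (\<Sum>x\<in>D. (u x - w x)\<^sup>2)"
      by (rule mult_left_mono) simp
    then have "real k * (4 * lam\<^sup>2) \<le> 4 * r\<^sup>2"
      using close by linarith
    then show ?thesis
      using lam by (simp add: field_simps)
  qed simp
  moreover have "real m \<le> 2 * real k + 1"
    unfolding k_def by linarith
  ultimately show ?thesis by linarith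
qed

lemma finite_lgraphs: "finite (lgraphs n)"
proof (rule finite_subset)
  show "lgraphs n \<subseteq> Pow ({0..<n} \<times> {0..<n})"
    unfolding lgraphs_def by auto
qed simp

lemma finite_Gn: "finite (Gn n)"
  unfolding Gn_def using finite_lgraphs by simp

definition iso_class :: "nat \<Rightarrow> (nat \<times> nat) set \<Rightarrow> (nat \<times> nat) set set" where
  "iso_class n E = {F \<in> lgraphs n. graph_iso n E F}"

lemma Gn_eq: "Gn n = iso_class n ` lgraphs n"
  unfolding Gn_def iso_class_def ..

lemma card_le_vc_dim:
  assumes "finite X" "S \<subseteq> X" "shatters H S"
  shows "card S \<le> vc_dim H X"
  unfolding vc_dim_def using assms finite_subset[OF _ assms(1)]
  by (intro Max_ge) (auto intro: finite_subset[of _ "card ` Pow X"])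

lemma vc_dim_attained:
  assumes "finite X" "H \<noteq> {}"
  obtains S where "S \<subseteq> X" "shatters H S" "card S = vc_dim H X"
proof -
  let ?C = "{card S | S. S \<subseteq> X \<and> finite S \<and> shatters H S}"
  have "shatters H {}"
    using assms(2) unfolding shatters_def by blast
  then have "?C \<noteq> {}" by blast
  moreover have "finite ?C"
    using assms(1) by (auto intro: finite_subset[of _ "card ` Pow X"])
  ultimately have "vc_dim H X \<in> ?C"
    unfolding vc_dim_def by (rule Max_in[rotated])
  then show thesis using that by auto
qed

lemma Hclass_nonempty: "Hclass n D r lam emb \<noteq> {}"
proof -
  have "(\<lambda>_. None) \<in> Hclass n D r lam emb"
    unfolding Hclass_def separable_def chull_def by auto
  then show ?thesis by blast
qed

lemma separable_if_shatters_Hclass: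
  assumes "shatters (Hclass n D r lam emb) S" "S \<subseteq> Gn n"
  shows "separable D r lam (emb ` {G \<in> S. f G}) (emb ` {G \<in> S. \<not> f G})"
proof -
  obtain h where h: "h \<in> Hclass n D r lam emb" "\<forall>G\<in>S. h G = Some (f G)"
    using assms(1) unfolding shatters_def by blast
  have "finite S"
    using assms(2) finite_Gn finite_subset by blast
  moreover have "S \<subseteq> {G \<in> Gn n. h G \<noteq> None}"
    using h(2) assms(2) by auto
  ultimately have "separable D r lam (emb ` {G \<in> S. h G = Some True}) (emb ` {G \<in> S. h G = Some False})"
    using h(1) unfolding Hclass_def by blast
  moreover have "{G \<in> S. h G = Some True} = {G \<in> S. f G}" "{G \<in> S. h G = Some False} = {G \<in> S. \<not> f G}"
    using h(2) by auto
  ultimately show ?thesis by simp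
qed

lemma shatters_HclassI:
  assumes "S \<subseteq> Gn n"
    and "\<And>f S'. S' \<subseteq> S \<Longrightarrow> separable D r lam (emb ` {G \<in> S'. f G}) (emb ` {G \<in> S'. \<not> f G})"
  shows "shatters (Hclass n D r lam emb) S"
  unfolding shatters_def
proof
  fix f :: "(nat \<times> nat) set set \<Rightarrow> bool"
  define h where "h G = (if G \<in> S then Some (f G) else None)" for G
  have "separable D r lam (emb ` {G \<in> S'. h G = Some True}) (emb ` {G \<in> S'. h G = Some False})"
    if "S' \<subseteq> {G \<in> Gn n. h G \<noteq> None}" for S'
  proof -
    have "S' \<subseteq> S" "{G \<in> S'. h G = Some True} = {G \<in> S'. f G}"
      "{G \<in> S'. h G = Some False} = {G \<in> S'. \<not> f G}"
      using that unfolding h_def by (auto simp: subset_iff split: if_splits)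
    then show ?thesis using assms(2) by simp
  qed
  then have "h \<in> Hclass n D r lam emb"
    unfolding Hclass_def using assms(1) h_def by auto
  moreover have "\<forall>G\<in>S. h G = Some (f G)"
    unfolding h_def by simp
  ultimately show "\<exists>h\<in>Hclass n D r lam emb. \<forall>G\<in>S. h G = Some (f G)" by blast
qed

lemma vc_dim_Hclass_le:
  assumes "0 < lam"
  shows "real (vc_dim (Hclass n D r lam emb) (Gn n)) \<le> 2 * (r\<^sup>2 / lam\<^sup>2) + 1"
proof -
  obtain S where S: "S \<subseteq> Gn n" "shatters (Hclass n D r lam emb) S"
    and card_S: "card S = vc_dim (Hclass n D r lam emb) (Gn n)"
    using vc_dim_attained[OF finite_Gn Hclass_nonempty] .
  obtain e where e: "bij_betw e {..<card S} S"
    using ex_bij_betw_nat_finite[of S] finite_subset[OF S(1) finite_Gn] by (auto simp: lessThan_atLeast0)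
  have sep: "separable D r lam (emb ` e ` J) (emb ` e ` ({..<card S} - J))" if "J \<subseteq> {..<card S}" for J
  proof -
    have inj: "inj_on e {..<card S}" and img: "e ` {..<card S} = S"
      using e by (auto simp: bij_betw_def)
    then have "{G \<in> S. G \<in> e ` J} = e ` J" "{G \<in> S. G \<notin> e ` J} = e ` ({..<card S} - J)"
      using that by (auto simp: inj_on_image_set_diff[OF inj])
    then show ?thesis
      using separable_if_shatters_Hclass[OF S(2,1), of "\<lambda>G. G \<in> e ` J"] by simp
  qed
  obtain c where "\<forall>x \<in> emb ` e ` {..<card S}. l2dist D c x \<le> r"
    using sep[of "{..<card S}"] unfolding separable_def by auto
  then have "\<forall>i<card S. l2dist D c (emb (e i)) \<le> r" by auto
  moreover have "\<forall>J \<subseteq> {..<card S}. \<forall>u\<in>chull ((\<lambda>i. emb (e i)) ` J).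
      \<forall>w\<in>chull ((\<lambda>i. emb (e i)) ` ({..<card S} - J)). 2 * lam \<le> l2dist D u w"
    using sep unfolding separable_def image_image by blast
  ultimately have "real (card S) \<le> 2 * (r\<^sup>2 / lam\<^sup>2) + 1"
    by (rule card_le_if_splits_separated[OF assms])
  then show ?thesis using card_S by simp
qed

lemma vc_dim_Hclass_ge_1:
  assumes "0 \<le> r"
  shows "1 \<le> vc_dim (Hclass n D r lam emb) (Gn n)"
proof -
  define G where "G = iso_class n {}"
  have "{} \<in> lgraphs n"
    unfolding lgraphs_def sym_def by simp
  then have G: "G \<in> Gn n"
    unfolding G_def Gn_eq by blast
  have "separable D r lam (emb ` {G' \<in> S. f G'}) (emb ` {G' \<in> S. \<not> f G'})" if "S \<subseteq> {G}" for f S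
    unfolding separable_def
  proof (intro conjI exI[of _ "emb G"] ballI)
    show "l2dist D (emb G) x \<le> r" if "x \<in> emb ` {G' \<in> S. f G'} \<union> emb ` {G' \<in> S. \<not> f G'}" for x
      using that \<open>S \<subseteq> {G}\<close> assms by (auto simp: l2dist_def l2norm_def)
    show "2 * lam \<le> l2dist D u w"
      if "u \<in> chull (emb ` {G' \<in> S. f G'})" "w \<in> chull (emb ` {G' \<in> S. \<not> f G'})" for u w
      using that \<open>S \<subseteq> {G}\<close> unfolding chull_def by (cases "f G") auto
  qed
  then have "shatters (Hclass n D r lam emb) {G}"
    using G by (intro shatters_HclassI) auto
  then show ?thesis
    using card_le_vc_dim[OF finite_Gn, of "{G}"] G by simp
qed

section \<open>Lower bound: points with private supports\<close>

lemma inverse_card_le_sum_squares: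
  fixes a :: "'a \<Rightarrow> real"
  assumes "finite A" "A \<noteq> {}" "sum a A = 1"
  shows "1 / card A \<le> (\<Sum>i\<in>A. (a i)\<^sup>2)"
proof -
  have "1 \<le> (\<Sum>i\<in>A. (a i)\<^sup>2) * card A"
    using sum_squared_le_sum_of_squares[of a A] assms(3) by simp
  moreover have "0 < card A"
    using assms(1,2) by (simp add: card_gt_0_iff)
  ultimately show ?thesis
    by (simp add: field_simps)
qed

locale private_supports =
  fixes D :: "coord set" and I :: "'i set" and p :: "'i \<Rightarrow> coord \<Rightarrow> real"
    and M :: "'i \<Rightarrow> coord set" and N :: nat and s :: real
  assumes finite_D: "finite D" and finite_I: "finite I"
    and M_subset: "i \<in> I \<Longrightarrow> M i \<subseteq> D"
    and card_M: "i \<in> I \<Longrightarrow> card (M i) = N"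
    and on_own_support: "i \<in> I \<Longrightarrow> k \<in> M i \<Longrightarrow> p i k = s"
    and on_other_support: "i \<in> I \<Longrightarrow> j \<in> I \<Longrightarrow> j \<noteq> i \<Longrightarrow> k \<in> M i \<Longrightarrow> p j k = 0"
begin

lemma inj_on_points:
  assumes "0 < N" "s \<noteq> 0"
  shows "inj_on p I"
proof (rule inj_onI, rule ccontr)
  fix i j assume ij: "i \<in> I" "j \<in> I" "p i = p j" "i \<noteq> j"
  have "M i \<noteq> {}"
    using card_M[OF ij(1)] assms(1) by auto
  then obtain k where "k \<in> M i" by blast
  then have "p i k = s" "p j k = 0"
    using on_own_support[of i k] on_other_support[of i j k] ij by auto
  then show False using ij(3) assms(2) by simp
qed

lemma supports_disjoint:
  assumes "s \<noteq> 0" "i \<in> I" "j \<in> I" "i \<noteq> j"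
  shows "M i \<inter> M j = {}"
proof (rule ccontr)
  assume "M i \<inter> M j \<noteq> {}"
  then obtain k where "k \<in> M i" "k \<in> M j" by blast
  then have "p j k = s" "p j k = 0"
    using on_own_support[of j k] on_other_support[of i j k] assms by auto
  then show False using assms(1) by simp
qed

lemma combination_diff_on_support:
  assumes J: "J1 \<subseteq> I" "J0 \<subseteq> I" "J1 \<inter> J0 = {}" "finite J1" and i: "i \<in> J1" and k: "k \<in> M i"
  shows "(\<Sum>i'\<in>J1. a i' * p i' k) - (\<Sum>j\<in>J0. b j * p j k) = a i * s"
proof -
  have "a i' * p i' k = (if i' = i then a i * s else 0)" if "i' \<in> J1" for i'
    using on_own_support[of i k] on_other_support[of i i' k] i k that J(1) by auto
  then have "(\<Sum>i'\<in>J1. a i' * p i' k) = a i * s"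
    using i J(4) by simp
  moreover have "(\<Sum>j\<in>J0. b j * p j k) = 0"
  proof (intro sum.neutral ballI)
    fix j assume "j \<in> J0"
    then have "j \<in> I" "j \<noteq> i"
      using i J by auto
    then show "b j * p j k = 0"
      using on_other_support[of i j k] i k J(1) by auto
  qed
  ultimately show ?thesis by simp
qed

lemma sum_sq_diff_ge:
  assumes J: "J1 \<subseteq> I" "J0 \<subseteq> I" "J1 \<inter> J0 = {}" "J1 \<noteq> {}" and a: "sum a J1 = 1"
  shows "s\<^sup>2 * N / card J1 \<le> (\<Sum>k\<in>D. ((\<Sum>i\<in>J1. a i * p i k) - (\<Sum>j\<in>J0. b j * p j k))\<^sup>2)"
    (is "_ \<le> (\<Sum>k\<in>D. (?F k)\<^sup>2)")
proof (cases "s = 0")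
  case True
  then show ?thesis by (simp add: sum_nonneg)
next
  case False
  have finite_J1: "finite J1"
    using J(1) finite_I finite_subset by blast
  have "s\<^sup>2 * N * (1 / card J1) \<le> s\<^sup>2 * N * (\<Sum>i\<in>J1. (a i)\<^sup>2)"
    using inverse_card_le_sum_squares[OF finite_J1 J(4) a] by (rule mult_left_mono) simp
  also have "\<dots> = (\<Sum>i\<in>J1. \<Sum>k\<in>M i. (?F k)\<^sup>2)"
  proof -
    have "(\<Sum>k\<in>M i. (?F k)\<^sup>2) = s\<^sup>2 * N * (a i)\<^sup>2" if "i \<in> J1" for i
    proof -
      have "(\<Sum>k\<in>M i. (?F k)\<^sup>2) = (\<Sum>k\<in>M i. (a i * s)\<^sup>2)"
        using combination_diff_on_support[OF J(1-3) finite_J1 that] by (intro sum.cong) auto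
      then show ?thesis
        using card_M[of i] that J(1) by (auto simp: power_mult_distrib)
    qed
    then show ?thesis
      by (simp add: sum_distrib_left)
  qed
  also have "\<dots> = (\<Sum>k\<in>(\<Union>i\<in>J1. M i). (?F k)\<^sup>2)"
  proof (rule sum.UNION_disjoint[symmetric])
    show "\<forall>i\<in>J1. finite (M i)"
      using J(1) M_subset finite_D finite_subset by blast
    show "\<forall>i\<in>J1. \<forall>j\<in>J1. i \<noteq> j \<longrightarrow> M i \<inter> M j = {}"
      using J(1) supports_disjoint[OF False] by blast
  qed (rule finite_J1)
  also have "\<dots> \<le> (\<Sum>k\<in>D. (?F k)\<^sup>2)"
    using J(1) M_subset finite_D by (intro sum_mono2) auto
  finally show ?thesis by simp
qed

lemma separable_split:
  fixes c :: "coord \<Rightarrow> real" and r lam :: real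
  assumes ball: "\<forall>i\<in>I. l2dist D c (p i) \<le> r"
    and margin: "4 * lam\<^sup>2 * card I \<le> s\<^sup>2 * N"
    and "J \<subseteq> I"
  shows "separable D r lam (p ` {i \<in> J. f i}) (p ` {i \<in> J. \<not> f i})"
  unfolding separable_def
proof (intro conjI exI[of _ c] ballI)
  fix x assume "x \<in> p ` {i \<in> J. f i} \<union> p ` {i \<in> J. \<not> f i}"
  then show "l2dist D c x \<le> r"
    using ball \<open>J \<subseteq> I\<close> by auto
next
  fix u w assume "u \<in> chull (p ` {i \<in> J. f i})" "w \<in> chull (p ` {i \<in> J. \<not> f i})"
  then obtain J1 a J0 b where J1: "finite J1" "J1 \<noteq> {}" "J1 \<subseteq> {i \<in> J. f i}" "sum a J1 = 1"
    and J0: "J0 \<subseteq> {i \<in> J. \<not> f i}"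
    and u: "u = (\<lambda>k. \<Sum>i\<in>J1. a i * p i k)" and w: "w = (\<lambda>k. \<Sum>j\<in>J0. b j * p j k)"
    by (elim chull_imageE) blast
  have "J1 \<subseteq> I" "J0 \<subseteq> I" "J1 \<inter> J0 = {}"
    using J1(3) J0 \<open>J \<subseteq> I\<close> by auto
  then have "s\<^sup>2 * N / card J1 \<le> (\<Sum>k\<in>D. (u k - w k)\<^sup>2)"
    unfolding u w using sum_sq_diff_ge J1(2,4) by simp
  moreover have "4 * lam\<^sup>2 \<le> s\<^sup>2 * N / card J1"
  proof -
    have "0 < card J1" "card J1 \<le> card I"
      using J1(1,2) \<open>J1 \<subseteq> I\<close> finite_I by (auto simp: card_gt_0_iff intro: card_mono)
    then have "4 * lam\<^sup>2 * card J1 \<le> 4 * lam\<^sup>2 * card I"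
      by (intro mult_left_mono) auto
    then have "4 * lam\<^sup>2 * card J1 \<le> s\<^sup>2 * N"
      using margin by linarith
    then show ?thesis
      using \<open>0 < card J1\<close> by (simp add: field_simps)
  qed
  ultimately have "(2 * lam)\<^sup>2 \<le> (\<Sum>k\<in>D. (u k - w k)\<^sup>2)"
    by (simp add: power_mult_distrib)
  then show "2 * lam \<le> l2dist D u w"
    unfolding l2dist_def l2norm_def by (rule real_le_rsqrt)
qed

end

lemma shatters_Hclass_private_supports:
  fixes s r lam :: real
  assumes "private_supports D I (\<lambda>i. emb (g i)) M N s" and "g ` I \<subseteq> Gn n"
    and "\<forall>i\<in>I. l2dist D c (emb (g i)) \<le> r" and "4 * lam\<^sup>2 * card I \<le> s\<^sup>2 * N"
  shows "shatters (Hclass n D r lam emb) (g ` I)"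
proof (rule shatters_HclassI[OF assms(2)])
  fix f S assume "S \<subseteq> g ` I"
  then obtain J where J: "J \<subseteq> I" "S = g ` J"
    by (meson subset_imageE)
  then have "{G \<in> S. f G} = g ` {i \<in> J. f (g i)}" "{G \<in> S. \<not> f G} = g ` {i \<in> J. \<not> f (g i)}"
    by auto
  then show "separable D r lam (emb ` {G \<in> S. f G}) (emb ` {G \<in> S. \<not> f G})"
    using private_supports.separable_split[OF assms(1,3,4) J(1), of "\<lambda>i. f (g i)"]
    by (simp add: image_image)
qed

section \<open>Regular graphs and their WLOA features\<close>

definition regular_graph :: "nat \<Rightarrow> nat \<Rightarrow> (nat \<times> nat) set \<Rightarrow> bool" where
  "regular_graph n d E \<longleftrightarrow> (\<forall>v<n. card {u. (v, u) \<in> E} = d)"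

lemma regular_graph_iso:
  assumes E: "E \<subseteq> {0..<n} \<times> {0..<n}" and iso: "graph_iso n E F" and reg: "regular_graph n d E"
  shows "regular_graph n d F"
  unfolding regular_graph_def
proof (intro allI impI)
  fix v assume "v < n"
  obtain \<pi> where \<pi>: "bij_betw \<pi> {0..<n} {0..<n}" and F: "F = (\<lambda>(u, v). (\<pi> u, \<pi> v)) ` E"
    using iso unfolding graph_iso_def by blast
  have inj: "inj_on \<pi> {0..<n}"
    using \<pi> by (simp add: bij_betw_def)
  have "v \<in> \<pi> ` {0..<n}"
    using \<pi> \<open>v < n\<close> by (simp add: bij_betw_def)
  then obtain w where w: "w < n" "v = \<pi> w"
    by auto
  have "{u. (v, u) \<in> F} = \<pi> ` {u. (w, u) \<in> E}"
  proof safe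
    fix u assume "(v, u) \<in> F"
    then obtain a b where ab: "(a, b) \<in> E" "\<pi> a = v" "\<pi> b = u"
      unfolding F by auto
    then have "a = w"
      using E w inj_onD[OF inj] by auto
    then show "u \<in> \<pi> ` {u. (w, u) \<in> E}"
      using ab by auto
  qed (use w F in auto)
  moreover have "inj_on \<pi> {u. (w, u) \<in> E}"
    using E by (auto intro: inj_on_subset[OF inj])
  ultimately show "card {u. (v, u) \<in> F} = d"
    using reg w unfolding regular_graph_def by (simp add: card_image)
qed

fun regular_colour :: "nat \<Rightarrow> nat \<Rightarrow> wlcol" where
  "regular_colour d 0 = Init"
| "regular_colour d (Suc t) = Step (regular_colour d t) (replicate_mset d (regular_colour d t))"

lemma regular_colour_eq_iff:
  assumes "t \<noteq> 0"
  shows "regular_colour d t = regular_colour d' t \<longleftrightarrow> d = d'"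
  using assms by (cases t) (auto dest: arg_cong[of _ _ size])

lemma wl_regular:
  assumes E: "E \<subseteq> {0..<n} \<times> {0..<n}" and reg: "regular_graph n d E" and "v < n"
  shows "wl E t v = regular_colour d t"
  using \<open>v < n\<close>
proof (induction t arbitrary: v)
  case 0
  then show ?case by simp
next
  case (Suc t)
  define N where "N = {u. (v, u) \<in> E}"
  have "N \<subseteq> {0..<n}"
    using E unfolding N_def by auto
  moreover have "finite N"
    using calculation finite_subset by blast
  ultimately have "image_mset (wl E t) (mset_set N) = image_mset (\<lambda>_. regular_colour d t) (mset_set N)"
    using Suc.IH by (intro image_mset_cong) auto
  also have "\<dots> = replicate_mset d (regular_colour d t)"
    using reg Suc.prems unfolding regular_graph_def N_def by (simp add: image_mset_const_eq)
  finally show ?case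
    using Suc by (simp add: N_def)
qed

definition colour_coords :: "nat \<Rightarrow> nat set \<Rightarrow> nat \<Rightarrow> coord set" where
  "colour_coords n A d = (\<lambda>(t, j). (t, regular_colour d t, j)) ` (A \<times> {1..n})"

lemma finite_colour_coords: "finite A \<Longrightarrow> finite (colour_coords n A d)"
  unfolding colour_coords_def by simp

lemma card_colour_coords:
  assumes "finite A"
  shows "card (colour_coords n A d) = card A * n"
proof -
  have "inj_on (\<lambda>(t, j). (t, regular_colour d t, j)) (A \<times> {1..n})"
    by (auto simp: inj_on_def)
  then show ?thesis
    unfolding colour_coords_def using assms by (simp add: card_image card_cartesian_product)
qed

lemma colour_coords_mono: "A \<subseteq> B \<Longrightarrow> colour_coords n A d \<subseteq> colour_coords n B d"
  unfolding colour_coords_def by (intro image_mono) auto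

lemma colour_coords_at_0: "colour_coords n {0} d = colour_coords n {0} d'"
  unfolding colour_coords_def by (rule image_cong) auto

lemma colour_coords_disjoint:
  assumes "0 \<notin> A" "d \<noteq> d'"
  shows "colour_coords n A d \<inter> colour_coords n B d' = {}"
proof -
  have "t \<noteq> 0" if "t \<in> A" for t
    using that assms(1) by metis
  then show ?thesis
    using assms(2) unfolding colour_coords_def by (auto simp: regular_colour_eq_iff)
qed

lemma regular_colour_in_Sigma:
  assumes "E \<in> lgraphs n" "regular_graph n d E" "0 < n"
  shows "regular_colour d t \<in> Sigma n t"
proof -
  have "regular_colour d t = wl E t 0"
    using wl_regular[of E n d 0 t] assms unfolding lgraphs_def by auto
  then show ?thesis
    unfolding Sigma_def using assms(1,3) by blast
qed

lemma wloa_lab_regular: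
  assumes E: "E \<in> lgraphs n" and reg: "regular_graph n d E"
  shows "wloa_lab n T E = indicator (colour_coords n {..T} d)"
proof
  fix x :: coord
  obtain t c j where x: "x = (t, c, j)" by (cases x)
  have "{v \<in> {0..<n}. wl E t v = c} = (if c = regular_colour d t then {0..<n} else {})"
    using wl_regular[of E n d _ t] E reg unfolding lgraphs_def by auto
  then have count: "colcount n E t c = (if c = regular_colour d t then n else 0)"
    unfolding colcount_def by simp
  have "x \<in> colour_coords n {..T} d \<longleftrightarrow> t \<le> T \<and> c = regular_colour d t \<and> 1 \<le> j \<and> j \<le> n"
    unfolding colour_coords_def x by auto
  moreover have "regular_colour d t \<in> Sigma n t" if "1 \<le> j" "j \<le> n"
    using regular_colour_in_Sigma[OF E reg] that by simp
  ultimately show "wloa_lab n T E x = indicator (colour_coords n {..T} d) x"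
    unfolding wloa_lab_def wloa_coords_def x by (auto simp: indicator_def count)
qed

lemma finite_Sigma: "finite (Sigma n t)"
proof (rule finite_subset)
  show "Sigma n t \<subseteq> (\<lambda>(E, v). wl E t v) ` (lgraphs n \<times> {..<n})"
    unfolding Sigma_def by auto
qed (simp add: finite_lgraphs)

lemma finite_wloa_coords: "finite (wloa_coords n T)"
proof (rule finite_subset)
  show "wloa_coords n T \<subseteq> {..T} \<times> (\<Union>t\<le>T. Sigma n t) \<times> {1..n}"
    unfolding wloa_coords_def by auto
qed (simp add: finite_Sigma)

lemma colour_coords_subset_wloa_coords:
  assumes "E \<in> lgraphs n" "regular_graph n d E"
  shows "colour_coords n {..T} d \<subseteq> wloa_coords n T"
  using regular_colour_in_Sigma[OF assms] unfolding colour_coords_def wloa_coords_def by auto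

lemma wloa_iso_class_regular:
  assumes "E \<in> lgraphs n" "regular_graph n d E"
  shows "wloa n T (iso_class n E) = indicator (colour_coords n {..T} d)"
proof -
  define F where "F = (SOME F. F \<in> iso_class n E)"
  have "graph_iso n E E"
    unfolding graph_iso_def by (intro exI[of _ id]) (simp add: case_prod_Pair)
  then have "E \<in> iso_class n E"
    using assms(1) by (simp add: iso_class_def)
  then have "F \<in> iso_class n E"
    unfolding F_def by (rule someI)
  then have F: "F \<in> lgraphs n" "graph_iso n E F"
    unfolding iso_class_def by auto
  then have "regular_graph n d F"
    using regular_graph_iso[OF _ F(2) assms(2)] assms(1) unfolding lgraphs_def by blast
  with F(1) show ?thesis
    unfolding wloa_def F_def[symmetric] by (rule wloa_lab_regular)
qed

lemma wloa_norm_iso_class_regular: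
  assumes "E \<in> lgraphs n" "regular_graph n d E"
  shows "wloa_norm n T (iso_class n E)
    = (\<lambda>x. indicator (colour_coords n {..T} d) x / sqrt (real (T + 1) * real n))"
proof -
  have "l2norm (wloa_coords n T) (indicator (colour_coords n {..T} d)) = sqrt (real (T + 1) * real n)"
    using l2norm_indicator[OF finite_wloa_coords colour_coords_subset_wloa_coords[OF assms]]
    by (simp add: card_colour_coords algebra_simps)
  then show ?thesis
    unfolding wloa_norm_def wloa_iso_class_regular[OF assms] by simp
qed

section \<open>Circulant graphs\<close>

text \<open>\<open>(v + n - u) mod n\<close> is the clockwise distance from \<open>u\<close> to \<open>v\<close>; the edges join vertices at
  cyclic distance between 1 and \<open>k\<close>.\<close>

definition circulant :: "nat \<Rightarrow> nat \<Rightarrow> (nat \<times> nat) set" where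
  "circulant n k = {(u, v). u < n \<and> v < n \<and> (v + n - u) mod n \<in> {1..k} \<union> {n - k..<n}}"

lemma cyclic_difference:
  fixes u v n :: nat
  assumes "u < n" "v < n"
  shows "(v + n - u) mod n = (if u \<le> v then v - u else v + n - u)"
proof (cases "u \<le> v")
  case True
  then have "(v + n - u) mod n = (v - u + n) mod n"
    by simp
  also have "\<dots> = v - u"
    using assms by simp
  finally show ?thesis
    using True by simp
qed (use assms in simp)

lemma circulant_in_lgraphs:
  assumes "2 * k < n"
  shows "circulant n k \<in> lgraphs n"
  using assms unfolding circulant_def lgraphs_def sym_def by (auto simp: cyclic_difference split: if_splits)

lemma circulant_regular:
  assumes "2 * k < n"
  shows "regular_graph n (2 * k) (circulant n k)"
  unfolding regular_graph_def
proof (intro allI impI)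
  fix v assume "v < n"
  define \<phi> where "\<phi> u = (u + n - v) mod n" for u
  define S where "S = {1..k} \<union> {n - k..<n}"
  have "inj_on \<phi> {..<n}"
    unfolding \<phi>_def inj_on_def using \<open>v < n\<close> by (auto simp: cyclic_difference split: if_splits)
  moreover have "\<phi> ` {..<n} \<subseteq> {..<n}"
    unfolding \<phi>_def using \<open>v < n\<close> by auto
  ultimately have img: "\<phi> ` {..<n} = {..<n}"
    by (simp add: endo_inj_surj)
  have "\<phi> ` {u \<in> {..<n}. \<phi> u \<in> S} = \<phi> ` {..<n} \<inter> S"
    by blast
  also have "\<dots> = S"
    unfolding img S_def using assms by auto
  finally have img_S: "\<phi> ` {u \<in> {..<n}. \<phi> u \<in> S} = S" .
  have "inj_on \<phi> {u \<in> {..<n}. \<phi> u \<in> S}"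
    using \<open>inj_on \<phi> {..<n}\<close> by (rule inj_on_subset) blast
  then have "card {u \<in> {..<n}. \<phi> u \<in> S} = card S"
    using card_image img_S by fastforce
  also have "card S = 2 * k"
    using assms unfolding S_def by (subst card_Un_disjoint) auto
  also have "{u \<in> {..<n}. \<phi> u \<in> S} = {u. (v, u) \<in> circulant n k}"
    unfolding circulant_def \<phi>_def S_def using \<open>v < n\<close> by auto
  finally show "card {u. (v, u) \<in> circulant n k} = 2 * k" .
qed

definition scaled_circulant_features :: "nat \<Rightarrow> nat \<Rightarrow> real \<Rightarrow> ((nat \<times> nat) set set \<Rightarrow> coord \<Rightarrow> real) \<Rightarrow> bool" where
  "scaled_circulant_features n T s emb \<longleftrightarrow> (\<forall>k. 2 * k < n \<longrightarrow>
     emb (iso_class n (circulant n k)) = (\<lambda>x. s * indicator (colour_coords n {..T} (2 * k)) x))"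

lemma scaled_circulant_features_wloa: "scaled_circulant_features n T 1 (wloa n T)"
  unfolding scaled_circulant_features_def
  using wloa_iso_class_regular[OF circulant_in_lgraphs circulant_regular] by simp

lemma scaled_circulant_features_wloa_norm:
  "scaled_circulant_features n T (1 / sqrt (real (T + 1) * real n)) (wloa_norm n T)"
  unfolding scaled_circulant_features_def
  using wloa_norm_iso_class_regular[OF circulant_in_lgraphs circulant_regular] by simp

lemma private_supports_circulants:
  assumes features: "scaled_circulant_features n T s emb" and m: "2 * m \<le> n"
  shows "private_supports (wloa_coords n T) {..<m} (\<lambda>k. emb (iso_class n (circulant n k)))
    (\<lambda>k. colour_coords n {1..T} (2 * k)) (T * n) s"
proof
  fix k assume "k \<in> {..<m}"
  then have k: "2 * k < n"
    using m by simp
  have emb_k: "emb (iso_class n (circulant n k)) = (\<lambda>x. s * indicator (colour_coords n {..T} (2 * k)) x)"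
    using features k unfolding scaled_circulant_features_def by blast
  have M_K: "colour_coords n {1..T} (2 * k) \<subseteq> colour_coords n {..T} (2 * k)"
    by (simp add: colour_coords_mono)
  show "colour_coords n {1..T} (2 * k) \<subseteq> wloa_coords n T"
    using M_K colour_coords_subset_wloa_coords[OF circulant_in_lgraphs[OF k] circulant_regular[OF k]]
    by blast
  show "card (colour_coords n {1..T} (2 * k)) = T * n"
    by (simp add: card_colour_coords)
  show "emb (iso_class n (circulant n k)) x = s" if "x \<in> colour_coords n {1..T} (2 * k)" for x
    using emb_k M_K that by (auto simp: indicator_def)
  show "emb (iso_class n (circulant n j)) x = 0"
    if "j \<in> {..<m}" "j \<noteq> k" "x \<in> colour_coords n {1..T} (2 * k)" for j x
  proof -
    have "emb (iso_class n (circulant n j)) = (\<lambda>x. s * indicator (colour_coords n {..T} (2 * j)) x)"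
      using features that(1) m unfolding scaled_circulant_features_def by auto
    moreover have "colour_coords n {1..T} (2 * k) \<inter> colour_coords n {..T} (2 * j) = {}"
      using that(2) by (intro colour_coords_disjoint) auto
    ultimately show ?thesis
      using that(3) by (auto simp: indicator_def)
  qed
qed (simp_all add: finite_wloa_coords)

lemma l2dist_circulant_features_le:
  fixes s r :: real
  assumes features: "scaled_circulant_features n T s emb" and k: "2 * k < n"
    and radius: "s\<^sup>2 * (T * n) \<le> r\<^sup>2" "0 \<le> r"
  shows "l2dist (wloa_coords n T) (\<lambda>x. s * indicator (colour_coords n {0} 0) x)
    (emb (iso_class n (circulant n k))) \<le> r"
proof -
  define K where "K = colour_coords n {..T} (2 * k)"
  define C where "C = colour_coords n {0} 0"
  have "C \<subseteq> K"
    unfolding K_def C_def colour_coords_at_0[of n 0 "2 * k"] by (simp add: colour_coords_mono)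
  moreover have "K \<subseteq> wloa_coords n T"
    unfolding K_def using colour_coords_subset_wloa_coords[OF circulant_in_lgraphs[OF k] circulant_regular[OF k]] .
  moreover have "card (K - C) = T * n"
    using \<open>C \<subseteq> K\<close> by (simp add: card_Diff_subset finite_colour_coords card_colour_coords K_def C_def)
  moreover have "emb (iso_class n (circulant n k)) = (\<lambda>x. s * indicator K x)"
    using features k unfolding scaled_circulant_features_def K_def by blast
  ultimately show ?thesis
    unfolding C_def[symmetric] using radius
    by (simp add: l2dist_le_iff sum_sq_diff_scaled_indicators finite_wloa_coords)
qed

lemma card_le_vc_dim_circulants:
  fixes s r lam :: real
  assumes lam: "0 < lam" and s: "0 < s" and features: "scaled_circulant_features n T s emb"
    and radius: "s\<^sup>2 * (T * n) \<le> r\<^sup>2" "0 \<le> r"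
    and m: "2 * m \<le> n" "4 * lam\<^sup>2 * m \<le> s\<^sup>2 * (T * n)"
  shows "m \<le> vc_dim (Hclass n (wloa_coords n T) r lam emb) (Gn n)"
proof (cases "m = 0")
  case False
  define g where "g k = iso_class n (circulant n k)" for k
  have "0 < 4 * lam\<^sup>2 * m"
    using False lam by simp
  then have "0 < s\<^sup>2 * (T * n)"
    using m(2) by linarith
  then have "0 < T * n"
    by (simp add: zero_less_mult_iff)
  interpret private_supports "wloa_coords n T" "{..<m}" "\<lambda>k. emb (g k)"
      "\<lambda>k. colour_coords n {1..T} (2 * k)" "T * n" s
    unfolding g_def using private_supports_circulants[OF features m(1)] .
  have ball: "\<forall>k\<in>{..<m}. l2dist (wloa_coords n T) (\<lambda>x. s * indicator (colour_coords n {0} 0) x) (emb (g k)) \<le> r"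
    unfolding g_def using l2dist_circulant_features_le[OF features _ radius] m(1) by simp
  have in_Gn: "g ` {..<m} \<subseteq> Gn n"
    unfolding g_def Gn_eq using m(1) circulant_in_lgraphs by auto
  have "shatters (Hclass n (wloa_coords n T) r lam emb) (g ` {..<m})"
    using m(2) by (intro shatters_Hclass_private_supports[OF private_supports_axioms in_Gn ball]) simp
  moreover have "card (g ` {..<m}) = m"
    using inj_on_points \<open>0 < T * n\<close> s by (simp add: card_image inj_on_def)
  ultimately show ?thesis
    using card_le_vc_dim[OF finite_Gn in_Gn] by simp
qed simp

lemma half_le_if_nat_below_le:
  fixes x V :: real
  assumes "1 \<le> V" and below: "\<And>m :: nat. real m \<le> x \<Longrightarrow> real m \<le> V"
  shows "x / 2 \<le> V"
proof (cases "x < 2")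
  case False
  then have "real (nat \<lfloor>x\<rfloor>) \<le> x" "x - 1 < real (nat \<lfloor>x\<rfloor>)"
    by linarith+
  then show ?thesis
    using below[of "nat \<lfloor>x\<rfloor>"] False by linarith
qed (use assms in linarith)

lemma vc_dim_Hclass_circulants_ge:
  fixes s r lam :: real
  assumes lam: "0 < lam" and s: "0 < s" and features: "scaled_circulant_features n T s emb"
    and radius: "s\<^sup>2 * (T * n) \<le> r\<^sup>2" "0 \<le> r"
    and small_margin: "s\<^sup>2 * (T * n) \<le> lam\<^sup>2 * n"
  shows "s\<^sup>2 * (T * n) / (8 * lam\<^sup>2) \<le> vc_dim (Hclass n (wloa_coords n T) r lam emb) (Gn n)"
proof -
  have "s\<^sup>2 * (T * n) / (4 * lam\<^sup>2) / 2 \<le> vc_dim (Hclass n (wloa_coords n T) r lam emb) (Gn n)"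
  proof (rule half_le_if_nat_below_le)
    show "1 \<le> real (vc_dim (Hclass n (wloa_coords n T) r lam emb) (Gn n))"
      using vc_dim_Hclass_ge_1[OF radius(2)] by simp
    fix m :: nat assume "real m \<le> s\<^sup>2 * (T * n) / (4 * lam\<^sup>2)"
    then have margin: "4 * lam\<^sup>2 * m \<le> s\<^sup>2 * (T * n)"
      using lam by (simp add: field_simps)
    then have "lam\<^sup>2 * (4 * m) \<le> lam\<^sup>2 * n"
      using small_margin by simp
    then have "2 * m \<le> n"
      using lam by simp
    then show "real m \<le> vc_dim (Hclass n (wloa_coords n T) r lam emb) (Gn n)"
      using card_le_vc_dim_circulants[OF lam s features radius _ margin] by simp
  qed
  then show ?thesis by simp
qed

lemma vc_dim_wloa_bounds:
  fixes T n :: nat and lam :: real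
  defines "r \<equiv> sqrt (real (T + 1) * real n)"
  assumes T: "0 < T" and lam: "0 < lam" and small: "r\<^sup>2 / lam\<^sup>2 \<le> real n"
  shows "1 / 16 * (r\<^sup>2 / lam\<^sup>2) \<le> real (vc_dim (Hclass n (wloa_coords n T) r lam (wloa n T)) (Gn n))
    \<and> real (vc_dim (Hclass n (wloa_coords n T) r lam (wloa n T)) (Gn n)) \<le> 3 * max 1 (r\<^sup>2 / lam\<^sup>2)"
proof
  have r2: "r\<^sup>2 = real (T + 1) * real n"
    unfolding r_def by simp
  have "real (T + 1) * real n \<le> 2 * real T * real n"
    using T by (intro mult_right_mono) auto
  then have "1 / 16 * (r\<^sup>2 / lam\<^sup>2) \<le> 1 / 16 * (2 * T * n / lam\<^sup>2)"
    unfolding r2 by (intro mult_left_mono divide_right_mono) auto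
  then have "1 / 16 * (r\<^sup>2 / lam\<^sup>2) \<le> (1 :: real)\<^sup>2 * (T * n) / (8 * lam\<^sup>2)"
    by simp
  also have "\<dots> \<le> vc_dim (Hclass n (wloa_coords n T) r lam (wloa n T)) (Gn n)"
  proof (rule vc_dim_Hclass_circulants_ge[OF lam _ scaled_circulant_features_wloa])
    show "1\<^sup>2 * real (T * n) \<le> lam\<^sup>2 * n"
      using small lam unfolding r2 by (simp add: field_simps)
    show "1\<^sup>2 * real (T * n) \<le> r\<^sup>2"
      unfolding r2 by (simp add: algebra_simps)
  qed (auto simp: r_def)
  finally show "1 / 16 * (r\<^sup>2 / lam\<^sup>2) \<le> vc_dim (Hclass n (wloa_coords n T) r lam (wloa n T)) (Gn n)" .
  show "vc_dim (Hclass n (wloa_coords n T) r lam (wloa n T)) (Gn n) \<le> 3 * max 1 (r\<^sup>2 / lam\<^sup>2)"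
    using vc_dim_Hclass_le[OF lam, of n "wloa_coords n T" r "wloa n T"] by (auto simp: max_def)
qed

lemma vc_dim_wloa_norm_bounds:
  fixes T n :: nat and lam :: real
  defines "\<rho> \<equiv> sqrt (real T / real (T + 1))"
  assumes T: "0 < T" and lam: "0 < lam" and small: "\<rho>\<^sup>2 / lam\<^sup>2 \<le> real n"
  shows "1 / 16 * (1 / lam\<^sup>2) \<le> real (vc_dim (Hclass n (wloa_coords n T) 1 lam (wloa_norm n T)) (Gn n))
    \<and> real (vc_dim (Hclass n (wloa_coords n T) 1 lam (wloa_norm n T)) (Gn n)) \<le> 3 * max 1 (1 / lam\<^sup>2)"
proof
  define s where "s = 1 / sqrt (real (T + 1) * real n)"
  have \<rho>2: "\<rho>\<^sup>2 = T / (T + 1)"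
    unfolding \<rho>_def by simp
  have "0 < n"
  proof (rule ccontr)
    assume "\<not> 0 < n"
    then have "T / (T + 1) / lam\<^sup>2 \<le> 0"
      using small unfolding \<rho>2 by simp
    moreover have "0 < T / (T + 1) / lam\<^sup>2"
      using T lam by simp
    ultimately show False by linarith
  qed
  then have s2: "s\<^sup>2 * (T * n) = T / (T + 1)"
    unfolding s_def by (simp add: power_divide)
  have features: "scaled_circulant_features n T s (wloa_norm n T)"
    unfolding s_def by (rule scaled_circulant_features_wloa_norm)
  have "1 \<le> real T"
    using T by simp
  then have "1 / 2 \<le> s\<^sup>2 * (T * n)"
    unfolding s2 by (simp add: field_simps)
  then have "1 / 16 * (1 / lam\<^sup>2) \<le> s\<^sup>2 * (T * n) / (8 * lam\<^sup>2)"
    using lam by (simp add: field_simps)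
  also have "\<dots> \<le> vc_dim (Hclass n (wloa_coords n T) 1 lam (wloa_norm n T)) (Gn n)"
  proof (rule vc_dim_Hclass_circulants_ge[OF lam _ features])
    show "0 < s"
      unfolding s_def using \<open>0 < n\<close> by simp
    show "s\<^sup>2 * (T * n) \<le> 1\<^sup>2"
      unfolding s2 by simp
    show "s\<^sup>2 * (T * n) \<le> lam\<^sup>2 * n"
      using small lam unfolding s2 \<rho>2[symmetric] by (simp add: pos_divide_le_eq mult.commute)
  qed simp
  finally show "1 / 16 * (1 / lam\<^sup>2) \<le> vc_dim (Hclass n (wloa_coords n T) 1 lam (wloa_norm n T)) (Gn n)" .
  show "vc_dim (Hclass n (wloa_coords n T) 1 lam (wloa_norm n T)) (Gn n) \<le> 3 * max 1 (1 / lam\<^sup>2)"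
    using vc_dim_Hclass_le[OF lam, of n "wloa_coords n T" 1 "wloa_norm n T"] by (auto simp: max_def)
qed

theorem proposition6:
  shows
  "(\<exists>c1 c2 :: real. 0 < c1 \<and> 0 < c2 \<and>
     (\<forall>(T::nat) (lam::real) (n::nat). 0 < T \<longrightarrow> 0 < lam \<longrightarrow>
        (let r = sqrt (real (T + 1) * real n) in
         r\<^sup>2 / lam\<^sup>2 \<le> real n \<longrightarrow>
           c1 * (r\<^sup>2 / lam\<^sup>2)
             \<le> real (vc_dim (Hclass n (wloa_coords n T) r lam (wloa n T)) (Gn n))
         \<and> real (vc_dim (Hclass n (wloa_coords n T) r lam (wloa n T)) (Gn n))
             \<le> c2 * max 1 (r\<^sup>2 / lam\<^sup>2))))
   \<and>
   (\<exists>c1 c2 :: real. 0 < c1 \<and> 0 < c2 \<and>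
     (\<forall>(T::nat) (lam::real) (n::nat). 0 < T \<longrightarrow> 0 < lam \<longrightarrow>
        (let r = sqrt (real T / real (T + 1)) in
         r\<^sup>2 / lam\<^sup>2 \<le> real n \<longrightarrow>
           c1 * (1 / lam\<^sup>2)
             \<le> real (vc_dim (Hclass n (wloa_coords n T) 1 lam (wloa_norm n T)) (Gn n))
         \<and> real (vc_dim (Hclass n (wloa_coords n T) 1 lam (wloa_norm n T)) (Gn n))
             \<le> c2 * max 1 (1 / lam\<^sup>2))))"
proof -
  have "0 < (1 / 16 :: real)" "0 < (3 :: real)"
    by simp_all
  then show ?thesis
    unfolding Let_def using vc_dim_wloa_bounds vc_dim_wloa_norm_bounds by blast
qed

end
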